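(* Let $\tau$ be a bounded trace on $\mathcal A$ (a bounded linear functional with $\tau(f\#g)=\tau(g\#f)$ for all $f,g\in\mathcal A$). Then $\mathcal J\subseteq\ker\tau$ if and only if $\tau(\delta_e)=0$. Consequently $\tau$ induces (drops to) a bounded trace on $\mathcal A/\mathcal J$ if and only if $\tau(\delta_e)=0$.
   Context: Let $\mathrm{Cu}_2$ be the involutive monoid with identity $e$ and zero element $\lozenge$ (so $\lozenge t=\lozenge=t\lozenge$ for all $t$), generated by $s_1,s_2,s_1^*,s_2^*$ subject to $s_1^*s_1=e=s_2^*s_2$ and $s_1^*s_2=\lozenge=s_2^*s_1$, with involution $t\mapsto t^*$ satisfying $(t^* )^*=t$, $(tu)^*=u^*t^*$. Let $\mathcal A=\ell^1(\mathrm{Cu}_2\setminus\{\lozenge\})$ with product $\#$ determined by bilinearity and continuity from $\delta_s\#\delta_t=\delta_{st}$ if $st\neq\lozenge$ and $\delta_s\#\delta_t=0$ if $st=\lozenge$; this is a unital Banach algebra with unit $\delta_e$. Let $f_0=\delta_e-\delta_{s_1s_1^*}-\delta_{s_2s_2^*}$ and let $\mathcal J$ be the closed two-sided ideal of $\mathcal A$ generated by $f_0$. A trace $\tau$ drops to $\mathcal A/\mathcal J$ if there is a (necessarily bounded trace) $\tau'$ on $\mathcal A/\mathcal J$ with $\tau'\circ\pi_{\mathcal J}=\tau$, $\pi_{\mathcal J}$ being the quotient map. *)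

theory Defs
  imports "HOL-Analysis.Analysis"
begin

datatype gen = S1 | S2

text \<open>Every element of Cu_2 other than the zero is uniquely of the form
  s_mu (s_nu)^* with mu, nu words in {s1,s2}; Elem mu nu denotes it.
  Zero denotes the zero element (lozenge).\<close>
datatype cu2 = Zero | Elem "gen list" "gen list"

fun cu_mult :: "cu2 \<Rightarrow> cu2 \<Rightarrow> cu2" where
  "cu_mult Zero t = Zero"
| "cu_mult s Zero = Zero"
| "cu_mult (Elem mu nu) (Elem al be) =
     (if take (length nu) al = nu then Elem (mu @ drop (length nu) al) be
      else if take (length al) nu = al then Elem mu (be @ drop (length al) nu)
      else Zero)"

fun cu_star :: "cu2 \<Rightarrow> cu2" where
  "cu_star Zero = Zero"
| "cu_star (Elem mu nu) = Elem nu mu"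

definition cu_e :: cu2 where "cu_e = Elem [] []"
definition cu_s1 :: cu2 where "cu_s1 = Elem [S1] []"
definition cu_s2 :: cu2 where "cu_s2 = Elem [S2] []"

lemma cu_relations:
  "cu_mult (cu_star cu_s1) cu_s1 = cu_e" "cu_mult (cu_star cu_s2) cu_s2 = cu_e"
  "cu_mult (cu_star cu_s1) cu_s2 = Zero" "cu_mult (cu_star cu_s2) cu_s1 = Zero"
  by (simp_all add: cu_e_def cu_s1_def cu_s2_def)

definition l1 :: "(cu2 \<Rightarrow> complex) set" where
  "l1 = {f. f Zero = 0 \<and> (\<lambda>s. norm (f s)) summable_on UNIV}"

definition l1norm :: "(cu2 \<Rightarrow> complex) \<Rightarrow> real" where
  "l1norm f = infsum (\<lambda>s. norm (f s)) UNIV"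

definition delta :: "cu2 \<Rightarrow> cu2 \<Rightarrow> complex" where
  "delta s = (\<lambda>t. if t = s \<and> s \<noteq> Zero then 1 else 0)"

definition conv :: "(cu2 \<Rightarrow> complex) \<Rightarrow> (cu2 \<Rightarrow> complex) \<Rightarrow> cu2 \<Rightarrow> complex" where
  "conv f g = (\<lambda>u. if u = Zero then 0
      else infsum (\<lambda>(s, t). f s * g t) {(s, t). cu_mult s t = u})"

definition f0 :: "cu2 \<Rightarrow> complex" where
  "f0 = (\<lambda>t. delta cu_e t - delta (Elem [S1] [S1]) t - delta (Elem [S2] [S2]) t)"

definition closed_ideal :: "(cu2 \<Rightarrow> complex) set \<Rightarrow> bool" where
  "closed_ideal I \<longleftrightarrow>
     I \<subseteq> l1 \<and> (\<lambda>_. 0) \<in> I \<and>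
     (\<forall>f\<in>I. \<forall>g\<in>I. (\<lambda>s. f s + g s) \<in> I) \<and>
     (\<forall>c. \<forall>f\<in>I. (\<lambda>s. c * f s) \<in> I) \<and>
     (\<forall>a\<in>l1. \<forall>f\<in>I. conv a f \<in> I \<and> conv f a \<in> I) \<and>
     (\<forall>f\<in>l1. (\<forall>\<epsilon>>0. \<exists>g\<in>I. l1norm (\<lambda>s. f s - g s) < \<epsilon>) \<longrightarrow> f \<in> I)"

definition J :: "(cu2 \<Rightarrow> complex) set" where
  "J = \<Inter> {I. closed_ideal I \<and> f0 \<in> I}"

definition bounded_trace :: "((cu2 \<Rightarrow> complex) \<Rightarrow> complex) \<Rightarrow> bool" where
  "bounded_trace \<tau> \<longleftrightarrow>
     (\<forall>f\<in>l1. \<forall>g\<in>l1. \<tau> (\<lambda>s. f s + g s) = \<tau> f + \<tau> g) \<and>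
     (\<forall>c. \<forall>f\<in>l1. \<tau> (\<lambda>s. c * f s) = c * \<tau> f) \<and>
     (\<exists>C. \<forall>f\<in>l1. norm (\<tau> f) \<le> C * l1norm f) \<and>
     (\<forall>f\<in>l1. \<forall>g\<in>l1. \<tau> (conv f g) = \<tau> (conv g f))"

definition qmap :: "(cu2 \<Rightarrow> complex) \<Rightarrow> (cu2 \<Rightarrow> complex) set" where
  "qmap f = {(\<lambda>s. f s + j s) | j. j \<in> J}"

definition drops :: "((cu2 \<Rightarrow> complex) \<Rightarrow> complex) \<Rightarrow> bool" where
  "drops \<tau> \<longleftrightarrow> (\<exists>\<tau>'. \<forall>f\<in>l1. \<tau>' (qmap f) = \<tau> f)"

end

theory Submission
  imports Defs
begin

text \<open>Since \<open>\<tau>\<close> is a trace, \<open>\<tau>(s\<^sub>i s\<^sub>i\<^sup>*) = \<tau>(s\<^sub>i\<^sup>* s\<^sub>i) = \<tau>(e)\<close>, so \<open>\<tau>(f\<^sub>0) = -\<tau>(\<delta>\<^sub>e)\<close>; as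
  \<open>f\<^sub>0 \<in> \<J>\<close>, vanishing on \<open>\<J>\<close> forces \<open>\<tau>(\<delta>\<^sub>e) = 0\<close>. Conversely, the set of \<open>f\<close> with
  \<open>\<tau>(f # x) = 0\<close> for all \<open>x\<close> is a closed two-sided ideal (by the trace property, associativity
  and boundedness) contained in \<open>ker \<tau>\<close>. When \<open>\<tau>(\<delta>\<^sub>e) = 0\<close> it contains \<open>f\<^sub>0\<close>: every \<open>x\<close>
  splits as \<open>x(e) \<delta>\<^sub>e + \<Sum>\<^sub>i s\<^sub>i # b\<^sub>i + \<Sum>\<^sub>i c\<^sub>i # s\<^sub>i\<^sup>*\<close>, and \<open>f\<^sub>0 # s\<^sub>i = 0 = s\<^sub>i\<^sup>* # f\<^sub>0\<close>,
  so the trace property kills all terms but \<open>x(e) \<tau>(f\<^sub>0)\<close>. Hence \<open>\<J>\<close> lies in that ideal.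
  Finally, \<open>\<tau>\<close> factors through \<open>\<A>/\<J>\<close> exactly when it vanishes on \<open>\<J>\<close>.\<close>

subsection \<open>Associativity of the multiplication of Cu_2\<close>

text \<open>\<open>Elem m n\<close> acts on words as the partial map \<open>n v \<mapsto> m v\<close>. This action is multiplicative
  and faithful, which reduces associativity to composition of partial maps.\<close>
fun cu_act :: "cu2 \<Rightarrow> gen list \<Rightarrow> gen list option" where
  "cu_act Zero w = None"
| "cu_act (Elem m n) w = (if take (length n) w = n then Some (m @ drop (length n) w) else None)"

lemma take_length_eq_iff: "take (length n) w = n \<longleftrightarrow> (\<exists>v. w = n @ v)"
  by (metis append_eq_conv_conj)

lemma cu_act_mult: "cu_act (cu_mult x y) w = Option.bind (cu_act y w) (cu_act x)"
proof (cases x; cases y)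
  fix mu nu al be assume [simp]: "x = Elem mu nu" "y = Elem al be"
  consider g where "al = nu @ g" | g where "nu = al @ g" "g \<noteq> []"
    | "\<forall>g. al \<noteq> nu @ g \<and> nu \<noteq> al @ g"
    by (metis append_Nil2 append_eq_append_conv2)
  then show ?thesis
  proof cases
    case 1
    then show ?thesis by (auto simp: take_length_eq_iff)
  next
    case 2
    then show ?thesis using take_length_eq_iff[of "be @ g" w] by (auto simp: take_length_eq_iff)
  next
    case 3
    then show ?thesis
      by (auto simp: take_length_eq_iff) (metis append_eq_append_conv2 append_take_drop_id take_append)
  qed
qed auto

lemma cu_act_inj: "cu_act x = cu_act y \<Longrightarrow> x = y"
proof (cases x; cases y)
  fix m n m' n' assume xy: "x = Elem m n" "y = Elem m' n'" and eq: "cu_act x = cu_act y"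
  have "cu_act y n = Some m" "cu_act x n' = Some m'"
    using xy eq[THEN fun_cong, of n] eq[THEN fun_cong, of n'] by simp_all
  then have "n = n'" "m = m'" using xy by (auto split: if_splits)
  then show ?thesis using xy by simp
qed (metis cu_act.simps append_Nil2 drop_all order_refl take_all option.distinct(1))+

lemma cu_mult_assoc: "cu_mult (cu_mult x y) z = cu_mult x (cu_mult y z)"
proof (rule cu_act_inj)
  have act: "cu_act (cu_mult x y) = (\<lambda>w. Option.bind (cu_act y w) (cu_act x))" for x y
    by (simp add: fun_eq_iff cu_act_mult)
  show "cu_act (cu_mult (cu_mult x y) z) = cu_act (cu_mult x (cu_mult y z))"
    by (simp add: act)
qed

lemma cu_mult_Zero_right [simp]: "cu_mult s Zero = Zero"
  by (cases s) auto

lemma cu_mult_e_right [simp]: "cu_mult s cu_e = s"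
  by (cases s) (auto simp: cu_e_def)

lemma cu_mult_gen_left: "cu_mult (Elem [i] []) t = (case t of Zero \<Rightarrow> Zero | Elem m n \<Rightarrow> Elem (i # m) n)"
  by (cases t) auto

lemma cu_mult_gen_star_right: "cu_mult t (Elem [] [i]) = (case t of Zero \<Rightarrow> Zero | Elem m n \<Rightarrow> Elem m (i # n))"
  by (cases t) auto

lemma abs_summable_on_product:
  fixes a :: "'a \<Rightarrow> 'c::real_normed_div_algebra" and b :: "'b \<Rightarrow> 'c"
  assumes "(\<lambda>x. norm (a x)) summable_on UNIV" "(\<lambda>y. norm (b y)) summable_on UNIV"
  shows "(\<lambda>p. norm ((\<lambda>(x, y). a x * b y) p)) summable_on UNIV"
proof -
  have "(\<lambda>(x, y). norm (a x) * norm (b y)) summable_on Sigma UNIV (\<lambda>_. UNIV)"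
  proof (rule summable_on_SigmaI[where g = "\<lambda>x. norm (a x) * infsum (\<lambda>y. norm (b y)) UNIV"])
    show "((\<lambda>y. case (x, y) of (x, y) \<Rightarrow> norm (a x) * norm (b y)) has_sum
            norm (a x) * infsum (\<lambda>y. norm (b y)) UNIV) UNIV" for x
      using has_sum_cmult_right[OF has_sum_infsum[OF assms(2)]] by simp
    show "(\<lambda>x. norm (a x) * infsum (\<lambda>y. norm (b y)) UNIV) summable_on UNIV"
      using summable_on_cmult_left[OF assms(1)] by simp
  qed auto
  then show ?thesis by (simp add: case_prod_unfold norm_mult)
qed

lemma infsum_product:
  fixes a :: "'a \<Rightarrow> real" and b :: "'b \<Rightarrow> real"
  assumes "(\<lambda>(x, y). a x * b y) summable_on UNIV" "b summable_on UNIV"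
  shows "infsum (\<lambda>(x, y). a x * b y) UNIV = infsum a UNIV * infsum b UNIV"
proof -
  have "infsum (\<lambda>(x, y). a x * b y) (Sigma UNIV (\<lambda>_. UNIV)) = infsum (\<lambda>x. infsum (\<lambda>y. a x * b y) UNIV) UNIV"
    using infsum_Sigma'_banach[of "\<lambda>x y. a x * b y" UNIV "\<lambda>_. UNIV"] assms by simp
  also have "\<dots> = infsum a UNIV * infsum b UNIV"
    by (simp add: infsum_cmult_right' infsum_cmult_left')
  finally show ?thesis by simp
qed

lemma abs_summable_on_fibre_sums:
  fixes F :: "'a \<Rightarrow> 'c::banach" and h :: "'a \<Rightarrow> 'b"
  assumes F: "(\<lambda>x. norm (F x)) summable_on UNIV"
  shows "(\<lambda>u. norm (infsum F (h -` {u}))) summable_on UNIV"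
    and "infsum (\<lambda>u. norm (infsum F (h -` {u}))) UNIV \<le> infsum (\<lambda>x. norm (F x)) UNIV"
proof -
  define N where "N = (\<lambda>x. norm (F x))"
  have im: "(\<lambda>p. (h p, p)) ` UNIV = Sigma UNIV (\<lambda>u. h -` {u})" by auto
  have inj: "inj (\<lambda>p. (h p, p))" by (auto intro: inj_onI)
  have "(\<lambda>(u, p). N p) summable_on Sigma UNIV (\<lambda>u. h -` {u})"
    unfolding im[symmetric] using F inj by (subst summable_on_reindex) (auto simp: o_def N_def)
  then have S: "(\<lambda>u. infsum N (h -` {u})) summable_on UNIV"
    and E0: "infsum (\<lambda>u. infsum N (h -` {u})) UNIV = infsum (\<lambda>(u, p). N p) (Sigma UNIV (\<lambda>u. h -` {u}))"
    using summable_on_Sigma_banach[of "\<lambda>u p. N p" UNIV "\<lambda>u. h -` {u}"]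
          infsum_Sigma'_banach[of "\<lambda>u p. N p" UNIV "\<lambda>u. h -` {u}"] by auto
  have E1: "infsum (\<lambda>(u, p). N p) (Sigma UNIV (\<lambda>u. h -` {u})) = infsum N UNIV"
    unfolding im[symmetric] using inj by (subst infsum_reindex) (auto simp: o_def)
  have le: "norm (infsum F (h -` {u})) \<le> infsum N (h -` {u})" for u
    unfolding N_def by (rule norm_infsum_bound) (rule summable_on_subset_banach[OF F], auto)
  show S': "(\<lambda>u. norm (infsum F (h -` {u}))) summable_on UNIV"
    by (rule summable_on_comparison_test[OF S]) (auto simp: le)
  have "infsum (\<lambda>u. norm (infsum F (h -` {u}))) UNIV \<le> infsum (\<lambda>u. infsum N (h -` {u})) UNIV"
    by (rule infsum_mono[OF S' S le])
  also have "\<dots> = infsum N UNIV"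
    using E0 E1 by simp
  finally show "infsum (\<lambda>u. norm (infsum F (h -` {u}))) UNIV \<le> infsum (\<lambda>x. norm (F x)) UNIV"
    by (simp add: N_def)
qed

lemma infsum_indicator_point: "infsum (\<lambda>x. if x = q then c else 0) A = (if q \<in> A then c else (0::'a::{comm_monoid_add, t2_space}))"
proof -
  have "infsum (\<lambda>x. if x = q then c else 0) A = infsum (\<lambda>x. if x = q then c else 0) (A \<inter> {q})"
    by (rule infsum_cong_neutral) auto
  then show ?thesis by (cases "q \<in> A") auto
qed

lemma l1_zero: "(\<lambda>_. 0) \<in> l1"
  by (simp add: l1_def)

lemma l1_add: "f \<in> l1 \<Longrightarrow> g \<in> l1 \<Longrightarrow> (\<lambda>s. f s + g s) \<in> l1"
proof -
  assume f: "f \<in> l1" and g: "g \<in> l1"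
  have "(\<lambda>s. norm (f s) + norm (g s)) summable_on UNIV"
    using f g unfolding l1_def by (intro summable_on_add) auto
  then have "(\<lambda>s. norm (f s + g s)) summable_on UNIV"
    by (rule summable_on_comparison_test) (auto intro: norm_triangle_ineq)
  then show ?thesis using f g by (simp add: l1_def)
qed

lemma l1_smult: "f \<in> l1 \<Longrightarrow> (\<lambda>s. c * f s) \<in> l1"
  unfolding l1_def by (auto simp: norm_mult intro: summable_on_cmult_right)

lemma l1_diff: "f \<in> l1 \<Longrightarrow> g \<in> l1 \<Longrightarrow> (\<lambda>s. f s - g s) \<in> l1"
  using l1_add[of f "\<lambda>s. (-1) * g s"] l1_smult[of g "-1"] by simp

lemma l1_Zero: "f \<in> l1 \<Longrightarrow> f Zero = 0"
  by (simp add: l1_def)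

lemma l1norm_nonneg: "l1norm f \<ge> 0"
  unfolding l1norm_def by (rule infsum_nonneg) simp

lemma delta_l1: "delta s \<in> l1"
proof -
  have "(\<lambda>t. norm (delta s t)) summable_on {s}" by simp
  then have "(\<lambda>t. norm (delta s t)) summable_on UNIV"
    by (rule summable_on_cong_neutral[THEN iffD1, rotated -1]) (auto simp: delta_def)
  then show ?thesis by (simp add: l1_def delta_def)
qed

lemma delta_Zero: "delta Zero = (\<lambda>_. 0)"
  by (simp add: delta_def fun_eq_iff)

lemma l1_dominated_by_comp_inj:
  assumes "a \<in> l1" "inj g" "b Zero = 0" "\<And>t. norm (b t) \<le> norm (a (g t))"
  shows "b \<in> l1"
proof -
  have "(\<lambda>x. norm (a x)) summable_on range g"
    using assms(1) unfolding l1_def by (auto intro: summable_on_subset_banach)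
  then have "(\<lambda>t. norm (a (g t))) summable_on UNIV"
    using summable_on_reindex[of g UNIV "\<lambda>x. norm (a x)"] assms(2) by (simp add: o_def)
  then have "(\<lambda>t. norm (b t)) summable_on UNIV"
    by (rule summable_on_comparison_test) (use assms(4) in auto)
  then show ?thesis using assms(3) by (simp add: l1_def)
qed

lemma f0_l1: "f0 \<in> l1"
  unfolding f0_def by (intro l1_diff delta_l1)

subsection \<open>The convolution product\<close>

definition fibre :: "cu2 \<Rightarrow> (cu2 \<times> cu2) set" where
  "fibre u = {(s, t). cu_mult s t = u}"

lemma fibre_vimage: "fibre u = (\<lambda>(s, t). cu_mult s t) -` {u}"
  by (auto simp: fibre_def)

lemma conv_fibre: "conv f g u = (if u = Zero then 0 else infsum (\<lambda>(s, t). f s * g t) (fibre u))"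
  by (simp add: conv_def fibre_def)

lemma summable_on_product_l1:
  assumes "a \<in> l1" "b \<in> l1"
  shows "(\<lambda>(s, t). a s * b t) summable_on A"
proof -
  have "(\<lambda>p. norm ((\<lambda>(s, t). a s * b t) p)) summable_on UNIV"
    by (rule abs_summable_on_product) (use assms in \<open>auto simp: l1_def\<close>)
  then have "(\<lambda>(s, t). a s * b t) summable_on UNIV"
    by (rule abs_summable_summable)
  then show ?thesis by (rule summable_on_subset_banach) auto
qed

lemma conv_l1:
  assumes "a \<in> l1" "b \<in> l1"
  shows "conv a b \<in> l1" and "l1norm (conv a b) \<le> l1norm a * l1norm b"
proof -
  define F where "F = (\<lambda>(s, t). a s * b t)"
  have F: "(\<lambda>x. norm (F x)) summable_on UNIV"
    unfolding F_def by (rule abs_summable_on_product) (use assms in \<open>auto simp: l1_def\<close>)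
  note fibres = abs_summable_on_fibre_sums[OF F, of "\<lambda>(s, t). cu_mult s t"]
  have le: "norm (conv a b u) \<le> norm (infsum F ((\<lambda>(s, t). cu_mult s t) -` {u}))" for u
    by (simp add: conv_fibre fibre_vimage F_def)
  have S: "(\<lambda>u. norm (conv a b u)) summable_on UNIV"
    by (rule summable_on_comparison_test[OF fibres(1)]) (auto simp: le)
  then show "conv a b \<in> l1" by (simp add: l1_def conv_def)
  have "l1norm (conv a b) \<le> infsum (\<lambda>u. norm (infsum F ((\<lambda>(s, t). cu_mult s t) -` {u}))) UNIV"
    unfolding l1norm_def by (rule infsum_mono[OF S fibres(1) le])
  also have "\<dots> \<le> infsum (\<lambda>x. norm (F x)) UNIV" by (rule fibres(2))
  also have "\<dots> = infsum (\<lambda>(s, t). norm (a s) * norm (b t)) UNIV"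
    by (simp add: F_def case_prod_unfold norm_mult)
  also have "\<dots> = l1norm a * l1norm b"
    unfolding l1norm_def
    by (rule infsum_product) (use F assms in \<open>auto simp: F_def case_prod_unfold norm_mult l1_def\<close>)
  finally show "l1norm (conv a b) \<le> l1norm a * l1norm b" .
qed

lemma summable_on_triple_product_l1:
  assumes "a \<in> l1" "b \<in> l1" "c \<in> l1"
  shows "(\<lambda>(r, s, t). a r * b s * c t) summable_on T"
proof -
  have "(\<lambda>p. norm ((\<lambda>(s, t). b s * c t) p)) summable_on UNIV"
    by (rule abs_summable_on_product) (use assms in \<open>auto simp: l1_def\<close>)
  then have "(\<lambda>q. norm ((\<lambda>(r, p). a r * (\<lambda>(s, t). b s * c t) p) q)) summable_on UNIV"
    by (intro abs_summable_on_product) (use assms in \<open>auto simp: l1_def\<close>)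
  then have "(\<lambda>(r, p). a r * (\<lambda>(s, t). b s * c t) p) summable_on UNIV"
    by (rule abs_summable_summable)
  then have "(\<lambda>(r, s, t). a r * b s * c t) summable_on UNIV"
    by (simp add: case_prod_unfold mult.assoc)
  then show ?thesis by (rule summable_on_subset_banach) auto
qed

lemma conv_conv_left_eq_triple_sum:
  assumes "a \<in> l1" "b \<in> l1" "c \<in> l1" "u \<noteq> Zero"
  shows "conv (conv a b) c u = infsum (\<lambda>(r, s, t). a r * b s * c t) {(r, s, t). cu_mult (cu_mult r s) t = u}"
proof -
  let ?T = "{(r, s, t). cu_mult (cu_mult r s) t = u}"
  let ?S = "Sigma (fibre u) (\<lambda>(x, t). fibre x)"
  let ?f = "\<lambda>((x, t), (r, s)). a r * b s * c t"
  have bij: "bij_betw (\<lambda>(r, s, t). ((cu_mult r s, t), (r, s))) ?T ?S"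
    by (rule bij_betwI[where g = "\<lambda>((x, t), (r, s)). (r, s, t)"]) (auto simp: fibre_def)
  have sum: "?f summable_on ?S"
    using summable_on_triple_product_l1[OF assms(1-3)] summable_on_reindex_bij_betw[OF bij, of ?f]
    by (simp add: case_prod_unfold)
  have "conv (conv a b) c u = infsum (\<lambda>(x, t). infsum (\<lambda>(r, s). a r * b s * c t) (fibre x)) (fibre u)"
  proof -
    have "conv a b x * c t = infsum (\<lambda>(r, s). a r * b s * c t) (fibre x)" if "(x, t) \<in> fibre u" for x t
      using that assms(4) by (auto simp: conv_fibre fibre_def infsum_cmult_left'[symmetric] case_prod_unfold)
    then show ?thesis using assms(4) by (auto simp: conv_fibre intro!: infsum_cong)
  qed
  also have "\<dots> = infsum ?f ?S"
    using infsum_Sigma_banach[OF sum] by (simp add: case_prod_unfold)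
  also have "\<dots> = infsum (\<lambda>(r, s, t). a r * b s * c t) ?T"
    using infsum_reindex_bij_betw[OF bij, of ?f] by (simp add: case_prod_unfold)
  finally show ?thesis .
qed

lemma conv_conv_right_eq_triple_sum:
  assumes "a \<in> l1" "b \<in> l1" "c \<in> l1" "u \<noteq> Zero"
  shows "conv a (conv b c) u = infsum (\<lambda>(r, s, t). a r * b s * c t) {(r, s, t). cu_mult r (cu_mult s t) = u}"
proof -
  let ?T = "{(r, s, t). cu_mult r (cu_mult s t) = u}"
  let ?S = "Sigma (fibre u) (\<lambda>(r, y). fibre y)"
  let ?f = "\<lambda>((r, y), (s, t)). a r * b s * c t"
  have bij: "bij_betw (\<lambda>(r, s, t). ((r, cu_mult s t), (s, t))) ?T ?S"
    by (rule bij_betwI[where g = "\<lambda>((r, y), (s, t)). (r, s, t)"]) (auto simp: fibre_def)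
  have sum: "?f summable_on ?S"
    using summable_on_triple_product_l1[OF assms(1-3)] summable_on_reindex_bij_betw[OF bij, of ?f]
    by (simp add: case_prod_unfold)
  have "conv a (conv b c) u = infsum (\<lambda>(r, y). infsum (\<lambda>(s, t). a r * b s * c t) (fibre y)) (fibre u)"
  proof -
    have "a r * conv b c y = infsum (\<lambda>(s, t). a r * b s * c t) (fibre y)" if "(r, y) \<in> fibre u" for r y
      using that assms(4)
      by (auto simp: conv_fibre fibre_def infsum_cmult_right'[symmetric] case_prod_unfold mult.assoc)
    then show ?thesis using assms(4) by (auto simp: conv_fibre intro!: infsum_cong)
  qed
  also have "\<dots> = infsum ?f ?S"
    using infsum_Sigma_banach[OF sum] by (simp add: case_prod_unfold)
  also have "\<dots> = infsum (\<lambda>(r, s, t). a r * b s * c t) ?T"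
    using infsum_reindex_bij_betw[OF bij, of ?f] by (simp add: case_prod_unfold)
  finally show ?thesis .
qed

lemma conv_assoc:
  assumes "a \<in> l1" "b \<in> l1" "c \<in> l1"
  shows "conv (conv a b) c = conv a (conv b c)"
proof
  fix u
  show "conv (conv a b) c u = conv a (conv b c) u"
    using conv_conv_left_eq_triple_sum[OF assms] conv_conv_right_eq_triple_sum[OF assms]
    by (cases "u = Zero") (simp_all add: conv_def cu_mult_assoc)
qed
lemma conv_add_left:
  assumes "f \<in> l1" "g \<in> l1" "h \<in> l1"
  shows "conv (\<lambda>s. f s + g s) h = (\<lambda>u. conv f h u + conv g h u)"
proof
  fix u
  have "infsum (\<lambda>(s, t). (f s + g s) * h t) (fibre u) =
        infsum (\<lambda>(s, t). f s * h t) (fibre u) + infsum (\<lambda>(s, t). g s * h t) (fibre u)"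
    using infsum_add[OF summable_on_product_l1[OF assms(1,3)] summable_on_product_l1[OF assms(2,3)]]
    by (simp add: case_prod_unfold distrib_right)
  then show "conv (\<lambda>s. f s + g s) h u = conv f h u + conv g h u" by (simp add: conv_fibre)
qed

lemma conv_add_right:
  assumes "f \<in> l1" "g \<in> l1" "h \<in> l1"
  shows "conv h (\<lambda>s. f s + g s) = (\<lambda>u. conv h f u + conv h g u)"
proof
  fix u
  have "infsum (\<lambda>(s, t). h s * (f t + g t)) (fibre u) =
        infsum (\<lambda>(s, t). h s * f t) (fibre u) + infsum (\<lambda>(s, t). h s * g t) (fibre u)"
    using infsum_add[OF summable_on_product_l1[OF assms(3,1)] summable_on_product_l1[OF assms(3,2)]]
    by (simp add: case_prod_unfold distrib_left)
  then show "conv h (\<lambda>s. f s + g s) u = conv h f u + conv h g u" by (simp add: conv_fibre)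
qed

lemma conv_smult_left: "conv (\<lambda>s. c * f s) h = (\<lambda>u. c * conv f h u)"
proof
  fix u
  have "infsum (\<lambda>(s, t). c * f s * h t) (fibre u) = c * infsum (\<lambda>(s, t). f s * h t) (fibre u)"
    using infsum_cmult_right'[of c "\<lambda>(s, t). f s * h t" "fibre u"] by (simp add: case_prod_unfold mult.assoc)
  then show "conv (\<lambda>s. c * f s) h u = c * conv f h u" by (simp add: conv_fibre)
qed

lemma conv_smult_right: "conv h (\<lambda>s. c * f s) = (\<lambda>u. c * conv h f u)"
proof
  fix u
  have "infsum (\<lambda>(s, t). h s * (c * f t)) (fibre u) = c * infsum (\<lambda>(s, t). h s * f t) (fibre u)"
    using infsum_cmult_right'[of c "\<lambda>(s, t). h s * f t" "fibre u"] by (simp add: case_prod_unfold mult.left_commute)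
  then show "conv h (\<lambda>s. c * f s) u = c * conv h f u" by (simp add: conv_fibre)
qed

lemma conv_zero_left: "conv (\<lambda>_. 0) h = (\<lambda>_. 0)"
  by (simp add: conv_def fun_eq_iff case_prod_unfold)

lemma conv_diff_left:
  assumes "f \<in> l1" "g \<in> l1" "h \<in> l1"
  shows "conv (\<lambda>s. f s - g s) h = (\<lambda>u. conv f h u - conv g h u)"
  using conv_add_left[OF assms(1) l1_smult[OF assms(2), of "-1"] assms(3)] conv_smult_left[of "-1" g h]
  by simp

lemma conv_diff_right:
  assumes "f \<in> l1" "g \<in> l1" "h \<in> l1"
  shows "conv h (\<lambda>s. f s - g s) = (\<lambda>u. conv h f u - conv h g u)"
  using conv_add_right[OF assms(1) l1_smult[OF assms(2), of "-1"] assms(3)] conv_smult_right[of h "-1" g]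
  by simp

lemma conv_delta_delta: "conv (delta s) (delta t) = delta (cu_mult s t)"
proof
  fix u
  show "conv (delta s) (delta t) u = delta (cu_mult s t) u"
  proof (cases "u = Zero \<or> s = Zero \<or> t = Zero")
    case True
    then show ?thesis by (auto simp: conv_def delta_def case_prod_unfold)
  next
    case False
    have "(\<lambda>(x, y). delta s x * delta t y) = (\<lambda>p. if p = (s, t) then 1 else 0)"
      using False by (auto simp: delta_def fun_eq_iff)
    then show ?thesis using False by (simp add: conv_fibre infsum_indicator_point fibre_def delta_def)
  qed
qed

lemma conv_delta_left:
  assumes "s \<noteq> Zero"
  shows "conv (delta s) b u = (if u = Zero then 0 else infsum b {t. cu_mult s t = u})"
proof (cases "u = Zero")
  case False
  have "infsum (\<lambda>(x, y). delta s x * b y) (fibre u) = infsum (\<lambda>(x, y). delta s x * b y) (Pair s ` {t. cu_mult s t = u})"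
    by (rule infsum_cong_neutral) (auto simp: fibre_def delta_def)
  also have "\<dots> = infsum b {t. cu_mult s t = u}"
    by (subst infsum_reindex) (auto simp: o_def delta_def assms intro: inj_onI)
  finally show ?thesis using False by (simp add: conv_fibre)
qed (simp add: conv_def)

lemma conv_delta_right:
  assumes "t \<noteq> Zero"
  shows "conv a (delta t) u = (if u = Zero then 0 else infsum a {s. cu_mult s t = u})"
proof (cases "u = Zero")
  case False
  have "infsum (\<lambda>(x, y). a x * delta t y) (fibre u) = infsum (\<lambda>(x, y). a x * delta t y) ((\<lambda>s. (s, t)) ` {s. cu_mult s t = u})"
    by (rule infsum_cong_neutral) (auto simp: fibre_def delta_def)
  also have "\<dots> = infsum a {s. cu_mult s t = u}"
    by (subst infsum_reindex) (auto simp: o_def delta_def assms intro: inj_onI)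
  finally show ?thesis using False by (simp add: conv_fibre)
qed (simp add: conv_def)

lemma conv_delta_e_right:
  assumes "a \<in> l1"
  shows "conv a (delta cu_e) = a"
proof
  fix u
  have "{s. cu_mult s cu_e = u} = {u}" by auto
  then show "conv a (delta cu_e) u = a u"
    using l1_Zero[OF assms] by (simp add: conv_delta_right cu_e_def)
qed

lemma conv_delta_gen_Cons: "conv (delta (Elem [i] [])) b (Elem (x # m) n) = (if x = i then b (Elem m n) else 0)"
proof -
  have "{t. cu_mult (Elem [i] []) t = Elem (x # m) n} = (if x = i then {Elem m n} else {})"
    by (auto simp: cu_mult_gen_left split: cu2.splits) (metis cu2.exhaust)
  then show ?thesis by (simp add: conv_delta_left)
qed

lemma conv_delta_gen_Nil: "conv (delta (Elem [i] [])) b (Elem [] n) = 0"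
proof -
  have "{t. cu_mult (Elem [i] []) t = Elem [] n} = {}"
    by (auto simp: cu_mult_gen_left split: cu2.splits)
  then show ?thesis by (simp add: conv_delta_left)
qed

lemma conv_delta_gen_star_Cons: "conv c (delta (Elem [] [i])) (Elem m (y # n)) = (if y = i then c (Elem m n) else 0)"
proof -
  have "{t. cu_mult t (Elem [] [i]) = Elem m (y # n)} = (if y = i then {Elem m n} else {})"
    by (auto simp: cu_mult_gen_star_right split: cu2.splits) (metis cu2.exhaust)
  then show ?thesis by (simp add: conv_delta_right)
qed

lemma conv_delta_gen_star_Nil: "conv c (delta (Elem [] [i])) (Elem m []) = 0"
proof -
  have "{t. cu_mult t (Elem [] [i]) = Elem m []} = {}"
    by (auto simp: cu_mult_gen_star_right split: cu2.splits)
  then show ?thesis by (simp add: conv_delta_right)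
qed

subsection \<open>Splitting an element along the generators\<close>

text \<open>In the splitting of \<open>a\<close> below, the words \<open>s\<^sub>\<mu> (s\<^sub>\<nu>)\<^sup>*\<close> with
  nonempty \<open>\<mu>\<close> are caught by the left terms, those with empty \<open>\<mu>\<close> and nonempty \<open>\<nu>\<close> by the right
  terms, and \<open>e\<close> by the first term.\<close>

definition left_factor :: "gen \<Rightarrow> (cu2 \<Rightarrow> complex) \<Rightarrow> cu2 \<Rightarrow> complex" where
  "left_factor i a t = (case t of Zero \<Rightarrow> 0 | Elem m n \<Rightarrow> a (Elem (i # m) n))"

definition right_factor :: "gen \<Rightarrow> (cu2 \<Rightarrow> complex) \<Rightarrow> cu2 \<Rightarrow> complex" where
  "right_factor i a t = (case t of Zero \<Rightarrow> 0 | Elem m n \<Rightarrow> if m = [] then a (Elem [] (i # n)) else 0)"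

lemma left_factor_l1: "a \<in> l1 \<Longrightarrow> left_factor i a \<in> l1"
  by (rule l1_dominated_by_comp_inj[where g = "\<lambda>t. case t of Zero \<Rightarrow> Zero | Elem m n \<Rightarrow> Elem (i # m) n"])
    (auto simp: left_factor_def inj_def l1_Zero split: cu2.splits)

lemma right_factor_l1: "a \<in> l1 \<Longrightarrow> right_factor i a \<in> l1"
  by (rule l1_dominated_by_comp_inj[where g = "\<lambda>t. case t of Zero \<Rightarrow> Zero | Elem m n \<Rightarrow> Elem m (i # n)"])
    (auto simp: right_factor_def inj_def split: cu2.splits)

lemma l1_split_along_generators:
  assumes "a \<in> l1"
  shows "a = (\<lambda>u. a cu_e * delta cu_e u
     + conv (delta (Elem [S1] [])) (left_factor S1 a) u + conv (delta (Elem [S2] [])) (left_factor S2 a) u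
     + conv (right_factor S1 a) (delta (Elem [] [S1])) u + conv (right_factor S2 a) (delta (Elem [] [S2])) u)"
    (is "a = (\<lambda>u. ?rhs u)")
proof
  fix u
  show "a u = ?rhs u"
  proof (cases u)
    case Zero
    then show ?thesis using l1_Zero[OF assms] by (simp add: conv_def delta_def cu_e_def)
  next
    case (Elem m n)
    have delta_e: "delta (Elem [] []) (Elem p q) = (if p = [] \<and> q = [] then 1 else 0)" for p q
      by (simp add: delta_def)
    note simps = conv_delta_gen_Cons conv_delta_gen_Nil conv_delta_gen_star_Cons conv_delta_gen_star_Nil
      left_factor_def right_factor_def delta_e Elem cu_e_def
    show ?thesis
    proof (cases m; cases n)
      fix x m' y n' assume "m = x # m'" "n = y # n'"
      then show ?thesis by (cases x; cases y) (simp_all add: simps)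
    next
      fix x m' assume "m = x # m'" "n = []"
      then show ?thesis by (cases x) (simp_all add: simps)
    next
      fix y n' assume "m = []" "n = y # n'"
      then show ?thesis by (cases y) (simp_all add: simps)
    qed (simp add: simps)
  qed
qed

lemma conv_f0_delta_gen: "conv f0 (delta (Elem [i] [])) = (\<lambda>_. 0)"
proof -
  have "conv f0 (delta (Elem [i] [])) = (\<lambda>u. delta (Elem [i] []) u
      - delta (cu_mult (Elem [S1] [S1]) (Elem [i] [])) u - delta (cu_mult (Elem [S2] [S2]) (Elem [i] [])) u)"
    unfolding f0_def by (simp add: conv_diff_left l1_diff delta_l1 conv_delta_delta cu_e_def)
  then show ?thesis by (cases i) (simp_all add: delta_Zero)
qed

lemma conv_delta_gen_star_f0: "conv (delta (Elem [] [i])) f0 = (\<lambda>_. 0)"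
proof -
  have "conv (delta (Elem [] [i])) f0 = (\<lambda>u. delta (Elem [] [i]) u
      - delta (cu_mult (Elem [] [i]) (Elem [S1] [S1])) u - delta (cu_mult (Elem [] [i]) (Elem [S2] [S2])) u)"
    unfolding f0_def by (simp add: conv_diff_right l1_diff delta_l1 conv_delta_delta cu_e_def)
  then show ?thesis by (cases i) (simp_all add: delta_Zero)
qed

subsection \<open>Bounded traces\<close>

definition trace_kernel_ideal :: "((cu2 \<Rightarrow> complex) \<Rightarrow> complex) \<Rightarrow> (cu2 \<Rightarrow> complex) set" where
  "trace_kernel_ideal \<tau> = {f \<in> l1. \<forall>x\<in>l1. \<tau> (conv f x) = 0}"

context
  fixes \<tau> :: "(cu2 \<Rightarrow> complex) \<Rightarrow> complex"
  assumes trace: "bounded_trace \<tau>"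
begin

lemma trace_add: "f \<in> l1 \<Longrightarrow> g \<in> l1 \<Longrightarrow> \<tau> (\<lambda>s. f s + g s) = \<tau> f + \<tau> g"
  using trace by (simp add: bounded_trace_def)

lemma trace_smult: "f \<in> l1 \<Longrightarrow> \<tau> (\<lambda>s. c * f s) = c * \<tau> f"
  using trace by (simp add: bounded_trace_def)

lemma trace_conv_commute: "f \<in> l1 \<Longrightarrow> g \<in> l1 \<Longrightarrow> \<tau> (conv f g) = \<tau> (conv g f)"
  using trace by (simp add: bounded_trace_def)

lemma trace_bounded: obtains C where "C \<ge> 0" "\<And>f. f \<in> l1 \<Longrightarrow> norm (\<tau> f) \<le> C * l1norm f"
proof -
  obtain C where "\<forall>f\<in>l1. norm (\<tau> f) \<le> C * l1norm f"
    using trace by (auto simp: bounded_trace_def)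
  then have "\<forall>f\<in>l1. norm (\<tau> f) \<le> \<bar>C\<bar> * l1norm f"
    using l1norm_nonneg by (meson abs_ge_self mult_right_mono order_trans)
  then show ?thesis using that[of "\<bar>C\<bar>"] by auto
qed

lemma trace_zero: "\<tau> (\<lambda>_. 0) = 0"
  using trace_smult[OF l1_zero, of 0] by simp

lemma trace_diff: "f \<in> l1 \<Longrightarrow> g \<in> l1 \<Longrightarrow> \<tau> (\<lambda>s. f s - g s) = \<tau> f - \<tau> g"
  using trace_add[of f "\<lambda>s. (-1) * g s"] trace_smult[of g "-1"] l1_smult[of g "-1"] by simp

lemma trace_delta_gen_proj: "\<tau> (delta (Elem [i] [i])) = \<tau> (delta cu_e)"
proof -
  have "\<tau> (delta (Elem [i] [i])) = \<tau> (conv (delta (Elem [i] [])) (delta (Elem [] [i])))"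
    by (simp add: conv_delta_delta)
  also have "\<dots> = \<tau> (conv (delta (Elem [] [i])) (delta (Elem [i] [])))"
    using trace_conv_commute delta_l1 by blast
  also have "\<dots> = \<tau> (delta cu_e)"
    by (simp add: conv_delta_delta cu_e_def)
  finally show ?thesis .
qed

lemma trace_f0: "\<tau> f0 = - \<tau> (delta cu_e)"
  unfolding f0_def by (simp add: trace_diff l1_diff delta_l1 trace_delta_gen_proj)

lemma trace_conv_f0:
  assumes e: "\<tau> (delta cu_e) = 0" and x: "x \<in> l1"
  shows "\<tau> (conv f0 x) = 0"
proof -
  have left: "\<tau> (conv f0 (conv (delta (Elem [i] [])) b)) = 0" if "b \<in> l1" for i b
    using conv_assoc[OF f0_l1 delta_l1 that, symmetric]
    by (simp add: conv_f0_delta_gen conv_zero_left trace_zero)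
  have right: "\<tau> (conv f0 (conv c (delta (Elem [] [i])))) = 0" if c: "c \<in> l1" for i c
  proof -
    have "\<tau> (conv f0 (conv c (delta (Elem [] [i])))) = \<tau> (conv (delta (Elem [] [i])) (conv f0 c))"
      using conv_assoc[OF f0_l1 c delta_l1] trace_conv_commute[OF conv_l1(1)[OF f0_l1 c] delta_l1] by simp
    also have "\<dots> = \<tau> (conv (conv (delta (Elem [] [i])) f0) c)"
      using conv_assoc[OF delta_l1 f0_l1 c] by simp
    finally show ?thesis by (simp add: conv_delta_gen_star_f0 conv_zero_left trace_zero)
  qed
  have unit: "\<tau> (conv f0 (\<lambda>u. x cu_e * delta cu_e u)) = 0"
    using e by (simp add: conv_smult_right conv_delta_e_right f0_l1 trace_smult trace_f0)
  let ?l = "\<lambda>i. conv (delta (Elem [i] [])) (left_factor i x)"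
  let ?r = "\<lambda>i. conv (right_factor i x) (delta (Elem [] [i]))"
  have l1: "(\<lambda>u. x cu_e * delta cu_e u) \<in> l1" "?l i \<in> l1" "?r i \<in> l1" for i
    by (auto intro!: l1_smult delta_l1 conv_l1(1) left_factor_l1 right_factor_l1 x)
  have distrib: "\<tau> (conv f0 (\<lambda>u. y u + z u)) = \<tau> (conv f0 y) + \<tau> (conv f0 z)"
    if "y \<in> l1" "z \<in> l1" for y z
    using conv_add_right[OF that f0_l1] trace_add conv_l1(1) f0_l1 that by simp
  have "\<tau> (conv f0 x) = \<tau> (conv f0 (\<lambda>u. x cu_e * delta cu_e u))
      + \<tau> (conv f0 (?l S1)) + \<tau> (conv f0 (?l S2)) + \<tau> (conv f0 (?r S1)) + \<tau> (conv f0 (?r S2))"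
    by (subst l1_split_along_generators[OF x]) (simp add: distrib l1 l1_add)
  then show ?thesis
    using unit left right left_factor_l1 right_factor_l1 x by simp
qed

lemma trace_kernel_ideal_closed:
  assumes f: "f \<in> l1" and approx: "\<forall>\<epsilon>>0. \<exists>g\<in>trace_kernel_ideal \<tau>. l1norm (\<lambda>s. f s - g s) < \<epsilon>"
  shows "f \<in> trace_kernel_ideal \<tau>"
proof -
  obtain C where C: "C \<ge> 0" "\<And>h. h \<in> l1 \<Longrightarrow> norm (\<tau> h) \<le> C * l1norm h"
    using trace_bounded by blast
  have "norm (\<tau> (conv f x)) \<le> 0 + e" if x: "x \<in> l1" and e: "e > 0" for x e
  proof -
    define M where "M = C * l1norm x + 1"
    have M: "M > 0" "C * l1norm x \<le> M"
      using mult_nonneg_nonneg[OF C(1) l1norm_nonneg[of x]] by (simp_all add: M_def)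
    obtain g where g: "g \<in> trace_kernel_ideal \<tau>" "l1norm (\<lambda>s. f s - g s) < e / M"
      using approx e M(1) by (meson divide_pos_pos)
    have gl: "g \<in> l1" and d: "(\<lambda>s. f s - g s) \<in> l1"
      using g(1) f by (auto simp: trace_kernel_ideal_def intro: l1_diff)
    have "\<tau> (conv f x) = \<tau> (conv (\<lambda>s. f s - g s) x)"
      using g(1) x by (simp add: conv_diff_left[OF f gl x] trace_diff conv_l1 f gl trace_kernel_ideal_def)
    also have "norm \<dots> \<le> C * (l1norm (\<lambda>s. f s - g s) * l1norm x)"
      using C(2)[OF conv_l1(1)[OF d x]] conv_l1(2)[OF d x] C(1) by (meson mult_left_mono order_trans)
    also have "\<dots> \<le> C * (e / M * l1norm x)"
      using g(2) C(1) l1norm_nonneg[of x] by (intro mult_left_mono mult_right_mono) auto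
    also have "\<dots> = e / M * (C * l1norm x)"
      by simp
    also have "\<dots> \<le> e"
      using M e by (simp add: field_simps)
    finally show ?thesis by simp
  qed
  then have "\<tau> (conv f x) = 0" if "x \<in> l1" for x
    using that by (metis field_le_epsilon norm_le_zero_iff)
  then show ?thesis using f by (simp add: trace_kernel_ideal_def)
qed

lemma closed_ideal_trace_kernel_ideal: "closed_ideal (trace_kernel_ideal \<tau>)"
proof -
  have "conv a f \<in> trace_kernel_ideal \<tau>" if a: "a \<in> l1" and f: "f \<in> trace_kernel_ideal \<tau>" for a f
  proof -
    have fl: "f \<in> l1" using f by (simp add: trace_kernel_ideal_def)
    have "\<tau> (conv (conv a f) x) = 0" if x: "x \<in> l1" for x
    proof -
      have "\<tau> (conv (conv a f) x) = \<tau> (conv (conv f x) a)"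
        using conv_assoc[OF a fl x] trace_conv_commute[OF a conv_l1(1)[OF fl x]] by simp
      also have "\<dots> = \<tau> (conv f (conv x a))"
        using conv_assoc[OF fl x a] by simp
      finally show ?thesis using f conv_l1(1)[OF x a] by (simp add: trace_kernel_ideal_def)
    qed
    then show ?thesis using a fl by (simp add: trace_kernel_ideal_def conv_l1)
  qed
  moreover have "conv f a \<in> trace_kernel_ideal \<tau>" if a: "a \<in> l1" and f: "f \<in> trace_kernel_ideal \<tau>" for a f
    using f a by (auto simp: trace_kernel_ideal_def conv_assoc conv_l1)
  ultimately show ?thesis
    unfolding closed_ideal_def using trace_kernel_ideal_closed
    by (auto simp: trace_kernel_ideal_def l1_zero l1_add l1_smult conv_zero_left trace_zero
        conv_add_left conv_smult_left trace_add trace_smult conv_l1)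
qed

lemma trace_kernel_ideal_subset_kernel: "trace_kernel_ideal \<tau> \<subseteq> {f \<in> l1. \<tau> f = 0}"
proof
  fix f assume "f \<in> trace_kernel_ideal \<tau>"
  then have "f \<in> l1" "\<tau> (conv f (delta cu_e)) = 0"
    using delta_l1 by (auto simp: trace_kernel_ideal_def)
  then show "f \<in> {f \<in> l1. \<tau> f = 0}" by (simp add: conv_delta_e_right)
qed

lemma J_subset_kernel:
  assumes "\<tau> (delta cu_e) = 0"
  shows "J \<subseteq> {f \<in> l1. \<tau> f = 0}"
proof -
  have "f0 \<in> trace_kernel_ideal \<tau>"
    using trace_conv_f0[OF assms] f0_l1 by (simp add: trace_kernel_ideal_def)
  then have "J \<subseteq> trace_kernel_ideal \<tau>"
    unfolding J_def using closed_ideal_trace_kernel_ideal by blast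
  then show ?thesis using trace_kernel_ideal_subset_kernel by blast
qed

end

lemma f0_in_J: "f0 \<in> J"
  by (simp add: J_def)

lemma J_add: "x \<in> J \<Longrightarrow> y \<in> J \<Longrightarrow> (\<lambda>s. x s + y s) \<in> J"
  by (auto simp: J_def closed_ideal_def)

lemma J_smult: "x \<in> J \<Longrightarrow> (\<lambda>s. c * x s) \<in> J"
  by (auto simp: J_def closed_ideal_def)

lemma zero_in_J: "(\<lambda>_. 0) \<in> J"
  using J_smult[OF f0_in_J, of 0] by simp

lemma qmap_f0: "qmap f0 = qmap (\<lambda>_. 0)"
proof -
  have "j \<in> qmap f0" if "j \<in> J" for j
  proof -
    have "(\<lambda>s. j s + (-1) * f0 s) \<in> J"
      using J_add[OF that J_smult[OF f0_in_J]] by blast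
    then show ?thesis unfolding qmap_def by force
  qed
  then show ?thesis using J_add[OF f0_in_J] by (auto simp: qmap_def)
qed

lemma drops_imp_vanishes_on_f0:
  assumes "drops \<tau>" "\<tau> (\<lambda>_. 0) = 0"
  shows "\<tau> f0 = 0"
  using assms f0_l1 l1_zero by (metis drops_def qmap_f0)

lemma drops_if_J_subset_kernel:
  assumes add: "\<And>f g. f \<in> l1 \<Longrightarrow> g \<in> l1 \<Longrightarrow> \<tau> (\<lambda>s. f s + g s) = \<tau> f + \<tau> g"
    and J: "J \<subseteq> {f \<in> l1. \<tau> f = 0}"
  shows "drops \<tau>"
proof -
  define \<tau>' where "\<tau>' X = \<tau> (SOME f. f \<in> l1 \<and> qmap f = X)" for X
  have "\<tau>' (qmap f) = \<tau> f" if f: "f \<in> l1" for f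
  proof -
    define g where "g = (SOME g. g \<in> l1 \<and> qmap g = qmap f)"
    have g: "g \<in> l1" "qmap g = qmap f"
      using someI[of "\<lambda>g. g \<in> l1 \<and> qmap g = qmap f" f] f by (auto simp: g_def)
    have "f \<in> qmap f"
      using zero_in_J unfolding qmap_def by force
    then obtain j where j: "j \<in> J" "f = (\<lambda>s. g s + j s)"
      using g(2) by (auto simp: qmap_def)
    then have "\<tau> f = \<tau> g"
      using J add g(1) by auto
    then show ?thesis by (simp add: \<tau>'_def g_def)
  qed
  then show ?thesis unfolding drops_def by blast
qed

theorem lemma4p2:
  assumes "bounded_trace \<tau>"
  shows "(J \<subseteq> {f \<in> l1. \<tau> f = 0} \<longleftrightarrow> \<tau> (delta cu_e) = 0)
       \<and> (drops \<tau> \<longleftrightarrow> \<tau> (delta cu_e) = 0)"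
proof -
  have f0: "\<tau> f0 = 0 \<longleftrightarrow> \<tau> (delta cu_e) = 0"
    using trace_f0[OF assms] by simp
  have "drops \<tau>" if "\<tau> (delta cu_e) = 0"
    using trace_add[OF assms] J_subset_kernel[OF assms that] by (rule drops_if_J_subset_kernel)
  moreover have "\<tau> (delta cu_e) = 0" if "drops \<tau>"
    using drops_imp_vanishes_on_f0[OF that trace_zero[OF assms]] f0 by blast
  moreover have "\<tau> (delta cu_e) = 0" if "J \<subseteq> {f \<in> l1. \<tau> f = 0}"
    using that f0 f0_in_J by blast
  ultimately show ?thesis
    using J_subset_kernel[OF assms] by blast
qed

end
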